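(* For every integer $r\ge1$ and every $x\in D$ (for $r=1$, every $x\in\mathbb C$ with $\mathcal S_1(x)\neq0$), $$\mathcal C_r(x)^{2^{r-1}}=\frac{\mathcal S_r(2x)}{\mathcal S_r(x)^{2^{r-1}}}.$$
   Context: For an integer $r\ge2$ let $P_r(y)=(1-y)\exp\left(y+\frac{y^2}{2}+\cdots+\frac{y^r}{r}\right)$. The multiple cosine function of Kurokawa–Koyama of order $r\ge2$ is $\mathcal C_r(x)=\prod_{n\ge1,\ n\text{ odd}}\left\{P_r\left(\frac{x}{n/2}\right)P_r\left(-\frac{x}{n/2}\right)^{(-1)^{r-1}}\right\}^{(n/2)^{r-1}}$, interpreted as $\mathcal C_r(x)=\exp\Big(\sum_{n\ge1,\,n\text{ odd}}(n/2)^{r-1}\big[\operatorname{Log}P_r(2x/n)+(-1)^{r-1}\operatorname{Log}P_r(-2x/n)\big]\Big)$, where $\operatorname{Log}P_r(y):=\operatorname{Log}(1-y)+y+\frac{y^2}{2}+\cdots+\frac{y^r}{r}$ with $\operatorname{Log}$ the principal branch, for $x\in D=\mathbb C\setminus\big((-\infty,-\tfrac12]\cup[\tfrac12,\infty)\big)$; $\mathcal C_1(x)=2\cos(\pi x)$. Kurokawa's multiple sine function is $\mathcal S_1(x)=2\sin(\pi x)$ and, for $r\ge2$, the meromorphic function $\mathcal S_r(x)=\exp\left(\frac{x^{r-1}}{r-1}\right)\prod_{n=1}^\infty\left\{P_r\left(\frac xn\right)P_r\left(-\frac xn\right)^{(-1)^{r-1}}\right\}^{n^{r-1}}$. *)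

theory Defs
  imports "HOL-Analysis.Analysis"
begin

definition Pr :: "nat \<Rightarrow> complex \<Rightarrow> complex" where
  "Pr r y = (1 - y) * exp (\<Sum>k=1..r. y ^ k / of_nat k)"

definition LogPr :: "nat \<Rightarrow> complex \<Rightarrow> complex" where
  "LogPr r y = Ln (1 - y) + (\<Sum>k=1..r. y ^ k / of_nat k)"

definition Dom :: "complex set" where
  "Dom = - (complex_of_real ` ({..-1/2} \<union> {1/2..}))"

definition mcos :: "nat \<Rightarrow> complex \<Rightarrow> complex" where
  "mcos r x = (if r = 1 then 2 * cos (of_real pi * x)
     else exp (\<Sum>k. (of_nat (2*k+1) / 2) ^ (r - 1) *
        (LogPr r (2 * x / of_nat (2*k+1)) + (-1) ^ (r - 1) * LogPr r (- 2 * x / of_nat (2*k+1)))))"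

definition msin :: "nat \<Rightarrow> complex \<Rightarrow> complex" where
  "msin r x = (if r = 1 then 2 * sin (of_real pi * x)
     else exp (x ^ (r - 1) / of_nat (r - 1)) *
       (\<Prod>m. (Pr r (x / of_nat (Suc m)) * (Pr r (- x / of_nat (Suc m))) powi ((-1) ^ (r - 1)))
               ^ (Suc m ^ (r - 1))))"

end

theory Submission
  imports Defs
begin

text \<open>For \<open>r = 1\<close> this is \<open>sin 2\<theta> = 2 sin \<theta> cos \<theta>\<close>. For \<open>r \<ge> 2\<close> the \<open>n\<close>-th factor
  of \<open>S\<^sub>r(y)\<close> is \<open>exp (n^(r-1) g(y/n))\<close> with \<open>g(z) = Log P\<^sub>r(z) + (-1)^(r-1) Log P\<^sub>r(-z)\<close>,
  and \<open>g(z) = O(|z|^(r+1))\<close>, so these exponents are \<open>O(n^-2)\<close> and \<open>S\<^sub>r\<close>, \<open>C\<^sub>r\<close> are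
  exponentials of absolutely convergent series. In the series for \<open>S\<^sub>r(2x)\<close> the term of
  index \<open>2n\<close> is \<open>2^(r-1)\<close> times the term of index \<open>n\<close> for \<open>S\<^sub>r(x)\<close>, while the
  odd-indexed terms are \<open>2^(r-1)\<close> times those for \<open>C\<^sub>r(x)\<close>; the prefactors
  \<open>exp ((2x)^(r-1)/(r-1))\<close> and \<open>exp (x^(r-1)/(r-1))^(2^(r-1))\<close> cancel.\<close>

lemma sums_odd_terms:
  fixes f :: "nat \<Rightarrow> 'a::real_normed_vector"
  assumes "summable (\<lambda>n. f (Suc n))" and "summable (\<lambda>n. f (2 * Suc n))"
  shows "(\<lambda>n. f (2 * n + 1)) sums ((\<Sum>n. f (Suc n)) - (\<Sum>n. f (2 * Suc n)))"
proof -
  have pairs: "(\<lambda>n. f (2 * n + 1) + f (2 * Suc n)) sums (\<Sum>n. f (Suc n))"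
  proof -
    have "(\<lambda>n. \<Sum>m\<in>{n * 2..<n * 2 + 2}. f (Suc m)) sums (\<Sum>n. f (Suc n))"
      using sums_group[OF summable_sums[OF assms(1)], of 2] by simp
    moreover have "{n * 2..<n * 2 + 2} = {2 * n, 2 * n + 1}" for n :: nat
      by auto
    ultimately show ?thesis
      by (simp add: mult.commute)
  qed
  show ?thesis
    using sums_diff[OF pairs summable_sums[OF assms(2)]] by simp
qed

lemma norm_LogPr_le:
  assumes z: "norm z \<le> 1/2"
  shows "norm (LogPr r z) \<le> 2 * norm z ^ (r + 1)"
proof -
  define f where "f = (\<lambda>n. - (z ^ n) / of_nat n)"
  have "f sums Ln (1 - z)"
    using Ln_series'[of "- z"] z by (simp add: f_def)
  moreover have "(\<Sum>i<Suc r. f i) = - (\<Sum>k=1..r. z ^ k / of_nat k)"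
  proof -
    have "(\<Sum>i<Suc r. f i) = (\<Sum>i\<in>insert 0 {1..r}. f i)"
      by (rule sum.cong) auto
    then show ?thesis
      by (simp add: f_def sum_negf)
  qed
  ultimately have tail: "(\<lambda>i. f (i + Suc r)) sums LogPr r z"
    unfolding LogPr_def by (subst sums_iff_shift) simp
  have tail_le: "norm (f (i + Suc r)) \<le> norm z ^ (r + 1) * (1/2) ^ i" for i
  proof -
    have "norm (f (i + Suc r)) = norm z ^ (i + Suc r) / real (i + Suc r)"
      unfolding f_def by (simp only: norm_divide norm_minus_cancel norm_power norm_of_nat)
    also have "\<dots> \<le> norm z ^ (i + Suc r)"
      using divide_left_mono[of 1 "real (i + Suc r)" "norm z ^ (i + Suc r)"] by simp
    also have "\<dots> = norm z ^ (r + 1) * norm z ^ i"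
      by (simp add: power_add)
    also have "\<dots> \<le> norm z ^ (r + 1) * (1/2) ^ i"
      by (intro mult_left_mono power_mono z) auto
    finally show ?thesis .
  qed
  have geometric: "summable (\<lambda>i. norm z ^ (r + 1) * (1/2::real) ^ i)"
    by (intro summable_mult summable_geometric) auto
  have "norm (LogPr r z) \<le> (\<Sum>i. norm z ^ (r + 1) * (1/2::real) ^ i)"
    using norm_suminf_le[OF tail_le geometric] tail by (simp add: sums_iff)
  also have "\<dots> = 2 * norm z ^ (r + 1)"
    using suminf_geometric[of "1/2::real"] by (subst suminf_mult) auto
  finally show ?thesis .
qed

lemma Pr_eq_exp_LogPr: "z \<noteq> 1 \<Longrightarrow> Pr r z = exp (LogPr r z)"
  unfolding Pr_def LogPr_def by (simp add: exp_add)

definition factor_log :: "nat \<Rightarrow> complex \<Rightarrow> nat \<Rightarrow> complex" where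
  "factor_log r y n = of_nat n ^ (r - 1) *
     (LogPr r (y / of_nat n) + (-1) ^ (r - 1) * LogPr r (- (y / of_nat n)))"

lemma norm_factor_log_le:
  assumes r: "r \<ge> 1" and n: "n \<ge> 1" and y: "norm y \<le> real n / 2"
  shows "norm (factor_log r y n) \<le> 4 * norm y ^ (r + 1) / real n ^ 2"
proof -
  obtain p where r_eq: "r = Suc p"
    using r by (cases r) auto
  define z where "z = y / of_nat n"
  have z: "norm z \<le> 1/2" "norm (- z) \<le> 1/2"
    using y n by (simp_all add: z_def norm_divide field_simps)
  have "norm (factor_log r y n) \<le> real n ^ p * (norm (LogPr r z) + norm (LogPr r (- z)))"
    unfolding factor_log_def z_def[symmetric] r_eq
    by (simp add: norm_mult norm_power mult_left_mono norm_triangle_le)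
  also have "\<dots> \<le> real n ^ p * (4 * norm z ^ (r + 1))"
    using norm_LogPr_le[OF z(1), of r] norm_LogPr_le[OF z(2), of r] by (intro mult_left_mono) auto
  also have "\<dots> = 4 * norm y ^ (r + 1) / real n ^ 2"
    using n by (simp add: z_def r_eq norm_divide power_divide field_simps power_add power2_eq_square)
  finally show ?thesis .
qed

lemma summable_factor_log:
  assumes r: "r \<ge> 1"
  shows "summable (\<lambda>n. factor_log r y (Suc n))"
proof (rule summable_comparison_test_ev)
  obtain N :: nat where N: "real N \<ge> 2 * norm y"
    using real_arch_simple by blast
  show "\<forall>\<^sub>F n in sequentially.
          norm (factor_log r y (Suc n)) \<le> 4 * norm y ^ (r + 1) * inverse (real (Suc n) ^ 2)"
    using eventually_ge_at_top[of N]
  proof eventually_elim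
    case (elim n)
    have "norm (factor_log r y (Suc n)) \<le> 4 * norm y ^ (r + 1) / real (Suc n) ^ 2"
      using elim N by (intro norm_factor_log_le r) auto
    then show ?case
      by (simp add: divide_inverse)
  qed
  have "summable (\<lambda>n. inverse (real n ^ 2))"
    by (rule inverse_power_summable) auto
  then have "summable (\<lambda>n. inverse (real (Suc n) ^ 2))"
    by (subst summable_Suc_iff)
  then show "summable (\<lambda>n. 4 * norm y ^ (r + 1) * inverse (real (Suc n) ^ 2))"
    by (rule summable_mult)
qed

lemma factor_log_double: "factor_log r (2 * y) (2 * n) = 2 ^ (r - 1) * factor_log r y n"
proof -
  have "2 * y / of_nat (2 * n) = y / of_nat n"
    by simp
  then show ?thesis
    by (simp add: factor_log_def power_mult_distrib)
qed

lemma msin_eq_exp: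
  assumes r: "r \<ge> 2" and y: "\<And>n. n \<ge> 1 \<Longrightarrow> y \<noteq> of_nat n \<and> y \<noteq> - of_nat n"
  shows "msin r y = exp (y ^ (r - 1) / of_nat (r - 1) + (\<Sum>n. factor_log r y (Suc n)))"
proof -
  have "(Pr r (y / of_nat (Suc n)) * Pr r (- y / of_nat (Suc n)) powi ((-1) ^ (r - 1)))
          ^ (Suc n ^ (r - 1)) = exp (factor_log r y (Suc n))" for n
  proof -
    have "y / of_nat (Suc n) \<noteq> 1" "y / of_nat (Suc n) \<noteq> -1"
      using y[of "Suc n"] by (simp_all add: divide_eq_eq del: of_nat_Suc)
    then have "y / of_nat (Suc n) \<noteq> 1" "- (y / of_nat (Suc n)) \<noteq> 1"
      by (metis minus_minus)+
    then show ?thesis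
      by (simp add: Pr_eq_exp_LogPr exp_power_int factor_log_def exp_add[symmetric]
                    exp_of_nat_mult[symmetric] del: of_nat_Suc)
  qed
  then have "msin r y = exp (y ^ (r - 1) / of_nat (r - 1)) * (\<Prod>n. exp (factor_log r y (Suc n)))"
    using r by (simp add: msin_def)
  also have "\<dots> = exp (y ^ (r - 1) / of_nat (r - 1) + (\<Sum>n. factor_log r y (Suc n)))"
    using r by (simp add: prodinf_exp summable_factor_log exp_add)
  finally show ?thesis .
qed

lemma mcos_eq_exp:
  assumes "r \<ge> 2"
  shows "mcos r x = exp (\<Sum>n. (1/2) ^ (r - 1) * factor_log r (2 * x) (2 * n + 1))"
proof -
  have "- 2 * x / of_nat (2 * n + 1) = - (2 * x / of_nat (2 * n + 1))" for n
    by simp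
  then show ?thesis
    using assms by (simp add: mcos_def factor_log_def power_divide del: of_nat_Suc)
qed

lemma Dom_ne_of_real:
  assumes "x \<in> Dom" and "\<bar>c\<bar> \<ge> 1/2"
  shows "x \<noteq> of_real c"
  using assms unfolding Dom_def by (auto simp: abs_if split: if_splits)

lemma mcos_duplication_order1:
  assumes "msin 1 x \<noteq> 0"
  shows "mcos 1 x = msin 1 (2 * x) / msin 1 x"
proof -
  have "msin 1 (2 * x) = mcos 1 x * msin 1 x"
    using sin_double[of "of_real pi * x"] by (simp add: msin_def mcos_def mult_ac)
  then show ?thesis
    using assms by simp
qed

lemma mcos_duplication:
  assumes r: "r \<ge> 2" and x: "x \<in> Dom"
  shows "mcos r x ^ (2 ^ (r - 1)) = msin r (2 * x) / msin r x ^ (2 ^ (r - 1))"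
proof -
  define S where "S = (\<Sum>n. factor_log r x (Suc n))"
  define T where "T = (\<Sum>n. factor_log r (2 * x) (Suc n))"
  define U where "U = (\<Sum>n. factor_log r (2 * x) (2 * n + 1))"
  have even_terms:
    "(\<lambda>n. factor_log r (2 * x) (2 * Suc n)) = (\<lambda>n. 2 ^ (r - 1) * factor_log r x (Suc n))"
    by (simp only: factor_log_double)
  have "(\<lambda>n. factor_log r (2 * x) (2 * n + 1)) sums (T - 2 ^ (r - 1) * S)"
    using sums_odd_terms[of "factor_log r (2 * x)"] summable_factor_log[of r] r
    unfolding even_terms T_def S_def by (simp add: summable_mult suminf_mult)
  then have U_eq: "U = T - 2 ^ (r - 1) * S"
    and U_summable: "summable (\<lambda>n. factor_log r (2 * x) (2 * n + 1))"
    by (auto simp: U_def sums_iff)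
  have poles: "y \<noteq> of_nat n \<and> y \<noteq> - of_nat n" if "y = x \<or> y = 2 * x" "n \<ge> 1" for y n
    using that Dom_ne_of_real[OF x, of "real n"] Dom_ne_of_real[OF x, of "- real n"]
      Dom_ne_of_real[OF x, of "real n / 2"] Dom_ne_of_real[OF x, of "- real n / 2"]
    by (auto simp: field_simps)
  have msin_x: "msin r x = exp (x ^ (r - 1) / of_nat (r - 1) + S)"
    unfolding S_def by (rule msin_eq_exp[OF r]) (use poles in auto)
  have msin_2x: "msin r (2 * x) = exp ((2 * x) ^ (r - 1) / of_nat (r - 1) + T)"
    unfolding T_def by (rule msin_eq_exp[OF r]) (use poles in auto)
  have "mcos r x = exp ((1/2) ^ (r - 1) * U)"
    unfolding mcos_eq_exp[OF r] U_def by (rule arg_cong[where f = exp], rule suminf_mult[OF U_summable])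
  then have "mcos r x ^ (2 ^ (r - 1)) = exp (of_nat (2 ^ (r - 1)) * ((1/2) ^ (r - 1) * U))"
    by (simp only: exp_of_nat_mult)
  also have "\<dots> = exp U"
    by (simp add: power_one_over)
  also have "\<dots> = exp ((2 * x) ^ (r - 1) / of_nat (r - 1) + T
                    - of_nat (2 ^ (r - 1)) * (x ^ (r - 1) / of_nat (r - 1) + S))"
    by (simp add: U_eq algebra_simps)
  also have "\<dots> = msin r (2 * x) / msin r x ^ (2 ^ (r - 1))"
    by (simp only: msin_x msin_2x exp_diff exp_of_nat_mult)
  finally show ?thesis .
qed

theorem corollary3p2:
  fixes r :: nat and x :: complex
  assumes "r \<ge> 1"
    and "if r = 1 then msin 1 x \<noteq> 0 else x \<in> Dom"
  shows "mcos r x ^ (2 ^ (r - 1)) = msin r (2 * x) / msin r x ^ (2 ^ (r - 1))"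
proof (cases "r = 1")
  case True
  then show ?thesis
    using assms(2) mcos_duplication_order1 by simp
next
  case False
  then show ?thesis
    using assms mcos_duplication by simp
qed

end
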